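(* For the $A_r$ $Q$-system with initial data $R_{\alpha,r-\alpha}=R_{\alpha,r-\alpha+1}=1$ for all $\alpha\in I_r$, $$\sum_{n\ge0}R_{1,n+r-1}\,t^n=1+t\,\frac{V_r(t)}{V_{r+1}(t)},\qquad V_m(t)=(-1)^m\,U_{2m}(\sqrt t),$$ where $U_m$ is the Chebyshev polynomial of the second kind, $U_m(2\cos\theta)=\frac{\sin(m+1)\theta}{\sin\theta}$ (each $V_m$ is a polynomial in $t$). For example, for $r=2$ the right side is $1+t\frac{1-3t+t^2}{1-6t+5t^2-t^3}$.
   Context: For $r\ge1$, $I_r=\{1,\dots,r\}$, the $A_r$ $Q$-system is the family $(R_{\alpha,n})_{0\le\alpha\le r+1,n\in\mathbb Z}$ with $R_{0,n}=R_{r+1,n}=1$ and $R_{\alpha,n+1}R_{\alpha,n-1}=R_{\alpha,n}^2+R_{\alpha+1,n}R_{\alpha-1,n}$ for $\alpha\in I_r$, $n\in\mathbb Z$; it is uniquely determined by the values $R_{\alpha,m_\alpha},R_{\alpha,m_\alpha+1}$ ($\alpha\in I_r$) for any $(m_1,\dots,m_r)\in\mathbb Z^r$ with $|m_{\alpha+1}-m_\alpha|\le1$. Here $m_\alpha=r-\alpha$. *)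

theory Defs
  imports Complex_Main "HOL-Computational_Algebra.Polynomial" "HOL-Computational_Algebra.Polynomial_FPS"
begin

text \<open>Chebyshev polynomials of the second kind, normalised so that
  U_m(2 cos theta) = sin((m+1) theta) / sin theta, i.e. U_0 = 1, U_1 = x,
  U_{m+2} = x U_{m+1} - U_m.\<close>
fun chebU :: "nat \<Rightarrow> real poly" where
  "chebU 0 = 1"
| "chebU (Suc 0) = [:0, 1:]"
| "chebU (Suc (Suc m)) = [:0, 1:] * chebU (Suc m) - chebU m"

definition chebV :: "nat \<Rightarrow> real poly" where
  "chebV m = (THE p. \<forall>t\<ge>0. poly p t = (-1) ^ m * poly (chebU (2 * m)) (sqrt t))"

definition is_Q_system :: "nat \<Rightarrow> (nat \<Rightarrow> int \<Rightarrow> real) \<Rightarrow> bool" where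
  "is_Q_system r R \<longleftrightarrow>
     (\<forall>n. R 0 n = 1) \<and> (\<forall>n. R (r + 1) n = 1) \<and>
     (\<forall>\<alpha> n. 1 \<le> \<alpha> \<and> \<alpha> \<le> r \<longrightarrow>
        R \<alpha> (n + 1) * R \<alpha> (n - 1) = (R \<alpha> n)\<^sup>2 + R (\<alpha> + 1) n * R (\<alpha> - 1) n)"

end

theory Submission
  imports Defs "Jordan_Normal_Form.Char_Poly"
begin

(* Proof idea (following Di Francesco and Kedem's Hankel-determinant solution of the
   A_r Q-system).  Let N = r + 1 and let T be the N x N tridiagonal matrix L L^T, where L has
   ones on the diagonal and the subdiagonal; so T has diagonal (1,2,...,2) and ones next to it.
   Since det T = 1, the integer powers T^q exist; put u(q) = (T^q)_00 ("moments") and let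
   F_a(q) = det (u(q+i+j))_{i,j<a} be their Hankel determinants.
   (1) By the Desnanot-Jacobi identity, R_{a,m} = F_a(1 + r - m - a) satisfies the Q-system
       relation, and F_0 = F_N = 1 gives the boundary values R_0 = R_{r+1} = 1.
   (2) The Hankel matrices for q = 0 and q = 1 are Gram matrices of unitriangular matrices,
       so this solution has exactly the initial data 1 on the staircase m_a = r - a.
   (3) A Q-system with positive initial data is determined by it in the forward direction,
       hence R_{1,n+r-1} = u(1 - n).
   (4) The negative moments u(-(n+1)) are the coefficients of the first entry of the resolvent
       (T - t)^{-1} e_0, which is solved explicitly by Chebyshev polynomials; this identifies
       the generating function with 1 + t V_r(t) / V_{r+1}(t). *)

lemma sum_lessThan_single:
  assumes "k < (n::nat)" "\<And>i. i < n \<Longrightarrow> i \<noteq> k \<Longrightarrow> f i = 0"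
  shows "(\<Sum>i<n. f i) = f k"
proof -
  have "(\<Sum>i<n. f i) = f k + (\<Sum>i\<in>{..<n} - {k}. f i)"
    using assms(1) by (intro sum.remove) auto
  also have "(\<Sum>i\<in>{..<n} - {k}. f i) = 0"
    using assms(2) by (intro sum.neutral) auto
  finally show ?thesis by simp
qed

lemma det_col_single:
  assumes A: "A \<in> carrier_mat n n" and j: "j < n" and k: "k < n"
    and z: "\<And>i. i < n \<Longrightarrow> i \<noteq> k \<Longrightarrow> A $$ (i, j) = 0"
  shows "det A = A $$ (k, j) * cofactor A k j"
  using laplace_expansion_column[OF A j] sum_lessThan_single[OF k, of "\<lambda>i. A $$ (i, j) * cofactor A i j"] z
  by simp

lemma det_row_single:
  assumes A: "A \<in> carrier_mat n n" and i: "i < n" and k: "k < n"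
    and z: "\<And>j. j < n \<Longrightarrow> j \<noteq> k \<Longrightarrow> A $$ (i, j) = 0"
  shows "det A = A $$ (i, k) * cofactor A i k"
  using laplace_expansion_row[OF A i] sum_lessThan_single[OF k, of "\<lambda>j. A $$ (i, j) * cofactor A i j"] z
  by simp

lemma det_zero_col:
  assumes A: "A \<in> carrier_mat n n" and j: "j < n"
    and z: "\<And>i. i < n \<Longrightarrow> A $$ (i, j) = 0"
  shows "det A = 0"
  using laplace_expansion_column[OF A j] z by simp

(* Expanding row i of A against the cofactors of row j gives det A or 0 (A adj A = det A). *)
lemma row_cofactor_sum:
  assumes A: "A \<in> carrier_mat n n" and ij: "i < n" "j < n"
  shows "(\<Sum>m<n. A $$ (i, m) * cofactor A j m) = (if i = j then det A else 0)"
proof -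
  have "(A * adj_mat A) $$ (i, j) = (det A \<cdot>\<^sub>m 1\<^sub>m n) $$ (i, j)" using adj_mat(2)[OF A] by simp
  moreover have "(A * adj_mat A) $$ (i, j) = (\<Sum>m<n. A $$ (i, m) * cofactor A j m)"
    using ij A adj_mat(1)[OF A] by (simp add: scalar_prod_def adj_mat_def lessThan_atLeast0)
  ultimately show ?thesis using ij by simp
qed

(* Auxiliary matrix for the Desnanot-Jacobi identity: the identity matrix with columns 0 and l
   replaced by the cofactor vectors of rows 0 and l of A. *)
definition cofactor_cols :: "'a :: comm_ring_1 mat \<Rightarrow> nat \<Rightarrow> 'a mat" where
  "cofactor_cols A l = mat (dim_row A) (dim_row A) (\<lambda>(i, j).
     if j = 0 then cofactor A 0 i else if j = l then cofactor A l i else if i = j then 1 else 0)"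

lemma mult_cofactor_cols_index:
  assumes A: "A \<in> carrier_mat n n" and l: "0 < l" "l < n" and ij: "i < n" "j < n"
  shows "(A * cofactor_cols A l) $$ (i, j) = (if j = 0 then (if i = 0 then det A else 0)
           else if j = l then (if i = l then det A else 0) else A $$ (i, j))"
proof -
  let ?B = "cofactor_cols A l"
  have "(A * ?B) $$ (i, j) = (\<Sum>m<n. A $$ (i, m) * ?B $$ (m, j))"
    using A ij by (simp add: cofactor_cols_def scalar_prod_def lessThan_atLeast0)
  also have "\<dots> = (if j = 0 then (if i = 0 then det A else 0)
           else if j = l then (if i = l then det A else 0) else A $$ (i, j))"
  proof -
    consider "j = 0" | "j = l" | "j \<noteq> 0" "j \<noteq> l" by blast
    then show ?thesis
    proof cases
      case 1
      then have "(\<Sum>m<n. A $$ (i, m) * ?B $$ (m, j)) = (\<Sum>m<n. A $$ (i, m) * cofactor A 0 m)"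
        using A by (intro sum.cong) (auto simp: cofactor_cols_def)
      then show ?thesis using row_cofactor_sum[OF A ij(1)] l 1 by simp
    next
      case 2
      then have "(\<Sum>m<n. A $$ (i, m) * ?B $$ (m, j)) = (\<Sum>m<n. A $$ (i, m) * cofactor A l m)"
        using A l by (intro sum.cong) (auto simp: cofactor_cols_def)
      then show ?thesis using row_cofactor_sum[OF A ij(1) l(2)] l 2 by simp
    next
      case 3
      then have "(\<Sum>m<n. A $$ (i, m) * ?B $$ (m, j)) = A $$ (i, j) * ?B $$ (j, j)"
        using A ij by (intro sum_lessThan_single) (auto simp: cofactor_cols_def)
      then show ?thesis using A ij 3 by (simp add: cofactor_cols_def)
    qed
  qed
  finally show ?thesis .
qed

(* Expanding along columns 0 and l:  det (A B) = (det A)^2 times the central minor of A. *)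
lemma det_mult_cofactor_cols:
  assumes A: "A \<in> carrier_mat (Suc (Suc k)) (Suc (Suc k))"
  shows "det (A * cofactor_cols A (Suc k))
           = det A * (det A * det (mat_delete (mat_delete A (Suc k) (Suc k)) 0 0))"
proof -
  define n where "n = Suc (Suc k)"
  define l where "l = Suc k"
  have A': "A \<in> carrier_mat n n" and ln: "0 < l" "l < n" "0 < n" "k < l"
    using A unfolding n_def l_def by auto
  define P where "P = A * cofactor_cols A l"
  have P: "P \<in> carrier_mat n n" using A' unfolding P_def by (simp add: cofactor_cols_def)
  note Pij = mult_cofactor_cols_index[OF A' ln(1,2), folded P_def]
  define Q where "Q = mat_delete P 0 0"
  have Q: "Q \<in> carrier_mat l l" using mat_delete_carrier[OF P, of 0 0] by (simp add: Q_def n_def l_def)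
  have Qij: "Q $$ (i, j) = P $$ (Suc i, Suc j)" if "i < l" "j < l" for i j
    using that P unfolding Q_def mat_delete_def by (simp add: n_def l_def)
  have detP: "det P = det A * det Q"
  proof -
    have "det P = P $$ (0, 0) * cofactor P 0 0"
      by (rule det_col_single[OF P ln(3) ln(3)]) (simp add: Pij ln)
    then show ?thesis using Pij[OF ln(3) ln(3)] by (simp add: cofactor_def Q_def)
  qed
  have detQ: "det Q = det A * det (mat_delete Q k k)"
  proof -
    have "det Q = Q $$ (k, k) * cofactor Q k k"
    proof (rule det_col_single[OF Q ln(4) ln(4)])
      fix i assume i: "i < l" "i \<noteq> k"
      have "Q $$ (i, k) = P $$ (Suc i, l)" using Qij[OF i(1) ln(4)] by (simp add: l_def)
      also have "\<dots> = 0" using Pij[of "Suc i" l] i ln by (simp add: l_def n_def)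
      finally show "Q $$ (i, k) = 0" .
    qed
    moreover have "Q $$ (k, k) = det A" using Qij[OF ln(4) ln(4)] Pij[OF ln(2) ln(2)] by (simp add: l_def)
    ultimately show ?thesis unfolding cofactor_def by simp
  qed
  have central: "mat_delete Q k k = mat_delete (mat_delete A l l) 0 0"
  proof (rule eq_matI)
    fix i j assume "i < dim_row (mat_delete (mat_delete A l l) 0 0)"
      "j < dim_col (mat_delete (mat_delete A l l) 0 0)"
    then have ij: "i < k" "j < k" using A' by (auto simp: n_def l_def)
    have "mat_delete Q k k $$ (i, j) = P $$ (Suc i, Suc j)"
      using ij Q Qij ln(4) unfolding mat_delete_def by (simp add: l_def)
    also have "\<dots> = mat_delete (mat_delete A l l) 0 0 $$ (i, j)"
      using Pij[of "Suc i" "Suc j"] ij A' unfolding mat_delete_def by (simp add: l_def n_def)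
    finally show "mat_delete Q k k $$ (i, j) = mat_delete (mat_delete A l l) 0 0 $$ (i, j)" .
  qed (insert Q A', auto simp: n_def l_def)
  show ?thesis using detP detQ central unfolding P_def l_def by simp
qed

lemma det_cofactor_cols:
  assumes A: "A \<in> carrier_mat (Suc (Suc k)) (Suc (Suc k))"
  shows "det (cofactor_cols A (Suc k))
           = cofactor A 0 0 * cofactor A (Suc k) (Suc k) - cofactor A 0 (Suc k) * cofactor A (Suc k) 0"
proof -
  define n where "n = Suc (Suc k)"
  define l where "l = Suc k"
  define B where "B = cofactor_cols A l"
  have B: "B \<in> carrier_mat n n" using A unfolding B_def cofactor_cols_def n_def by simp
  have ln: "l < n" "0 < n" "l \<noteq> 0" "k < l" unfolding l_def n_def by auto
  have Bij: "B $$ (i, j) = (if j = 0 then cofactor A 0 i else if j = l then cofactor A l i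
      else if i = j then 1 else 0)" if "i < n" "j < n" for i j
    using that A unfolding B_def cofactor_cols_def n_def by simp
  have "det B = (\<Sum>i<n. B $$ (i, 0) * cofactor B i 0)" by (rule laplace_expansion_column[OF B ln(2)])
  also have "\<dots> = (\<Sum>i\<in>{0, l}. B $$ (i, 0) * cofactor B i 0)"
  proof (rule sum.mono_neutral_right)
    show "\<forall>i\<in>{..<n} - {0, l}. B $$ (i, 0) * cofactor B i 0 = 0"
    proof
      fix i assume i: "i \<in> {..<n} - {0, l}"
      then obtain i' where i': "i = Suc i'" "i' < k" by (cases i) (auto simp: n_def l_def)
      (* deleting row i leaves column l zero *)
      have "det (mat_delete B i 0) = 0"
        by (rule det_zero_col[of _ l i'], insert B i i', auto simp: mat_delete_def Bij n_def l_def)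
      then show "B $$ (i, 0) * cofactor B i 0 = 0" unfolding cofactor_def by simp
    qed
  qed (use ln in auto)
  also have "\<dots> = B $$ (0, 0) * cofactor B 0 0 + B $$ (l, 0) * cofactor B l 0" using ln by simp
  also have "cofactor B 0 0 = cofactor A l l"
  proof -
    define D where "D = mat_delete B 0 0"
    have D: "D \<in> carrier_mat l l" unfolding D_def using mat_delete_carrier[OF B] by (simp add: n_def l_def)
    have "det D = D $$ (k, k) * cofactor D k k"
      by (rule det_row_single[OF D ln(4) ln(4)], insert B, auto simp: D_def mat_delete_def Bij l_def n_def)
    moreover have "mat_delete D k k = 1\<^sub>m k"
      by (rule eq_matI, insert B, auto simp: D_def mat_delete_def Bij l_def n_def)
    ultimately have "det D = D $$ (k, k)" unfolding cofactor_def by simp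
    also have "\<dots> = cofactor A l l" using B by (simp add: D_def mat_delete_def Bij l_def n_def)
    finally show ?thesis unfolding cofactor_def D_def by simp
  qed
  also have "cofactor B l 0 = - cofactor A l 0"
  proof -
    define D where "D = mat_delete B l 0"
    have D: "D \<in> carrier_mat l l" unfolding D_def using mat_delete_carrier[OF B] by (simp add: n_def l_def)
    have "det D = D $$ (0, k) * cofactor D 0 k"
      by (rule det_row_single[OF D _ ln(4)], insert B, auto simp: D_def mat_delete_def Bij l_def n_def)
    moreover have "mat_delete D 0 k = 1\<^sub>m k"
      by (rule eq_matI, insert B, auto simp: D_def mat_delete_def Bij l_def n_def)
    moreover have "D $$ (0, k) = cofactor A l 0" using B by (simp add: D_def mat_delete_def Bij l_def n_def)
    ultimately have "det D = (-1)^k * cofactor A l 0" unfolding cofactor_def by simp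
    then show ?thesis unfolding cofactor_def D_def by (simp add: l_def)
  qed
  also have "B $$ (0, 0) = cofactor A 0 0" using ln by (simp add: Bij)
  also have "B $$ (l, 0) = cofactor A 0 l" using ln by (simp add: Bij)
  finally show ?thesis unfolding B_def l_def by simp
qed

(* Desnanot-Jacobi identity, first for matrices with nonzero determinant (cancel det A). *)
lemma desnanot_jacobi_nonzero_det:
  fixes A :: "'a :: idom mat"
  assumes A: "A \<in> carrier_mat (Suc (Suc k)) (Suc (Suc k))" and dA: "det A \<noteq> 0"
  shows "det A * det (mat_delete (mat_delete A (Suc k) (Suc k)) 0 0)
       = det (mat_delete A 0 0) * det (mat_delete A (Suc k) (Suc k))
         - det (mat_delete A 0 (Suc k)) * det (mat_delete A (Suc k) 0)"
proof -
  define l where "l = Suc k"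
  define B where "B = cofactor_cols A l"
  have B: "B \<in> carrier_mat (Suc (Suc k)) (Suc (Suc k))" using A unfolding B_def cofactor_cols_def by simp
  have "det A * det B = det (A * B)" using det_mult[OF A B] by simp
  also have "\<dots> = det A * (det A * det (mat_delete (mat_delete A l l) 0 0))"
    using det_mult_cofactor_cols[OF A] unfolding B_def l_def .
  finally have "det B = det A * det (mat_delete (mat_delete A l l) 0 0)" using dA by simp
  moreover have "det B = det (mat_delete A 0 0) * det (mat_delete A l l)
                         - det (mat_delete A 0 l) * det (mat_delete A l 0)"
  proof -
    have "((-1::'a) ^ (0 + l)) * (-1) ^ (l + 0) = 1" by (simp flip: power_add)
    then have "cofactor A 0 l * cofactor A l 0 = det (mat_delete A 0 l) * det (mat_delete A l 0)"
      unfolding cofactor_def by (simp add: mult_ac)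
    then show ?thesis using det_cofactor_cols[OF A] unfolding B_def l_def cofactor_def by simp
  qed
  ultimately show ?thesis unfolding l_def by simp
qed

lemma map_mat_delete: "map_mat f (mat_delete M i j) = mat_delete (map_mat f M) i j"
  by (rule eq_matI) (auto simp: mat_delete_def)

(* Desnanot-Jacobi identity over any integral domain: apply the previous lemma to the
   characteristic matrix x I + A, whose determinant is a monic polynomial, and set x = 0. *)
lemma desnanot_jacobi:
  fixes A :: "'a :: idom mat"
  assumes A: "A \<in> carrier_mat (Suc (Suc k)) (Suc (Suc k))"
  shows "det A * det (mat_delete (mat_delete A (Suc k) (Suc k)) 0 0)
       = det (mat_delete A 0 0) * det (mat_delete A (Suc k) (Suc k))
         - det (mat_delete A 0 (Suc k)) * det (mat_delete A (Suc k) 0)"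
proof -
  define n where "n = Suc (Suc k)"
  define Ap where "Ap = char_poly_matrix (- A)"
  have mA: "- A \<in> carrier_mat n n" using A n_def by simp
  have Ap: "Ap \<in> carrier_mat (Suc (Suc k)) (Suc (Suc k))" unfolding Ap_def using mA n_def by simp
  have "coeff (char_poly (- A)) n = 1" using degree_monic_char_poly[OF mA] by simp
  then have "det Ap \<noteq> 0" unfolding Ap_def char_poly_def by auto
  note D = desnanot_jacobi_nonzero_det[OF Ap this]
  define h where "h = (\<lambda>p. poly p (0::'a))"
  have hom: "comm_ring_hom h" unfolding h_def by unfold_locales auto
  have hA: "map_mat h Ap = A"
    by (rule eq_matI, insert A, auto simp: h_def Ap_def char_poly_matrix_def)
  have key: "\<And>M. det (map_mat h M) = h (det M)" using comm_ring_hom.hom_det[OF hom] by simp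
  have e1: "det (mat_delete A i j) = h (det (mat_delete Ap i j))" for i j
    using key[of "mat_delete Ap i j"] map_mat_delete[of h Ap i j] hA by simp
  have e2: "det (mat_delete (mat_delete A i j) i' j') = h (det (mat_delete (mat_delete Ap i j) i' j'))"
    for i j i' j'
    using key[of "mat_delete (mat_delete Ap i j) i' j'"] map_mat_delete[of h "mat_delete Ap i j" i' j']
      map_mat_delete[of h Ap i j] hA by simp
  have e3: "det A = h (det Ap)" using key[of Ap] hA by simp
  have "h (det Ap * det (mat_delete (mat_delete Ap (Suc k) (Suc k)) 0 0))
       = h (det (mat_delete Ap 0 0) * det (mat_delete Ap (Suc k) (Suc k))
         - det (mat_delete Ap 0 (Suc k)) * det (mat_delete Ap (Suc k) 0))" using D by simp
  then show ?thesis unfolding e1 e2 e3 unfolding h_def by simp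
qed

lemma det_unit_upper_triangular:
  fixes Z :: "'a :: comm_ring_1 mat"
  assumes Z: "Z \<in> carrier_mat n n" and up: "\<And>i j. i < n \<Longrightarrow> j < i \<Longrightarrow> Z $$ (i, j) = 0"
    and d: "\<And>i. i < n \<Longrightarrow> Z $$ (i, i) = 1"
  shows "det Z = 1"
proof -
  have "det Z = prod_list (diag_mat Z)"
    by (rule det_upper_triangular[OF _ Z]) (insert Z up, auto simp: upper_triangular_def)
  also have "diag_mat Z = replicate n 1"
    unfolding diag_mat_def by (rule nth_equalityI, insert Z d, auto)
  finally show ?thesis by simp
qed

lemma det_gram_unit_triangular:
  fixes Z :: "nat \<Rightarrow> nat \<Rightarrow> 'a :: comm_ring_1"
  assumes up: "\<And>i k. i < k \<Longrightarrow> k < N \<Longrightarrow> Z k i = 0"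
    and d: "\<And>i. i < N \<Longrightarrow> Z i i = 1" and a: "a \<le> N"
  shows "det (mat a a (\<lambda>(i,j). \<Sum>k<N. Z k i * Z k j)) = 1"
proof -
  define Za where "Za = mat a a (\<lambda>(k,i). Z k i)"
  have Za: "Za \<in> carrier_mat a a" unfolding Za_def by simp
  have eq: "mat a a (\<lambda>(i,j). \<Sum>k<N. Z k i * Z k j) = transpose_mat Za * Za"
  proof (rule eq_matI)
    fix i j assume "i < dim_row (transpose_mat Za * Za)" "j < dim_col (transpose_mat Za * Za)"
    then have ij: "i < a" "j < a" using Za by auto
    (* rows k >= a of Z vanish in columns i, j < a *)
    have "(\<Sum>k<N. Z k i * Z k j) = (\<Sum>k<a. Z k i * Z k j)"
      by (rule sum.mono_neutral_right) (use up ij a in auto)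
    then show "mat a a (\<lambda>(i,j). \<Sum>k<N. Z k i * Z k j) $$ (i, j) = (transpose_mat Za * Za) $$ (i, j)"
      using ij by (simp add: Za_def scalar_prod_def lessThan_atLeast0 Matrix.row_def Matrix.col_def)
  qed (use Za in auto)
  have "det Za = 1"
    by (rule det_unit_upper_triangular[OF Za]) (use up d a in \<open>auto simp: Za_def\<close>)
  then show ?thesis unfolding eq using det_mult[of "transpose_mat Za" a Za] Za det_transpose[OF Za] by simp
qed

lemma pow_mat_commute:
  assumes A: "A \<in> carrier_mat n n"
  shows "A ^\<^sub>m k * A = A * A ^\<^sub>m k"
proof (induction k)
  case 0 then show ?case using A by simp
next
  case (Suc k)
  have "A ^\<^sub>m Suc k * A = (A * A ^\<^sub>m k) * A" using Suc by simp
  also have "\<dots> = A * (A ^\<^sub>m k * A)" using A by (simp add: assoc_mult_mat[of _ n n _ n _ n])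
  finally show ?case by simp
qed

lemma det_pow_mat:
  fixes A :: "'a :: comm_ring_1 mat"
  assumes A: "A \<in> carrier_mat n n"
  shows "det (A ^\<^sub>m k) = det A ^ k"
proof (induction k)
  case 0 then show ?case using A by simp
next
  case (Suc k) then show ?case using A det_mult[of "A ^\<^sub>m k" n A] by simp
qed

lemma transpose_pow_mat:
  fixes A :: "'a :: comm_ring_1 mat"
  assumes A: "A \<in> carrier_mat n n"
  shows "transpose_mat (A ^\<^sub>m k) = (transpose_mat A) ^\<^sub>m k"
proof (induction k)
  case 0 then show ?case using A by simp
next
  case (Suc k)
  have "transpose_mat (A ^\<^sub>m Suc k) = transpose_mat A * transpose_mat (A ^\<^sub>m k)"
    by (simp add: transpose_mult[of _ n n _ n] A)
  also have "\<dots> = (transpose_mat A) ^\<^sub>m k * transpose_mat A"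
    using Suc pow_mat_commute[of "transpose_mat A" n k] A by simp
  finally show ?case by simp
qed

definition bidiag :: "nat \<Rightarrow> real mat" where
  "bidiag N = mat N N (\<lambda>(i,j). if i = j \<or> i = Suc j then 1 else 0)"

definition tridiag :: "nat \<Rightarrow> real mat" where
  "tridiag N = bidiag N * transpose_mat (bidiag N)"

lemma bidiag_carrier[simp]: "bidiag N \<in> carrier_mat N N"
  unfolding bidiag_def by simp

lemma bidiag_dim[simp]: "dim_row (bidiag N) = N" "dim_col (bidiag N) = N"
  unfolding bidiag_def by simp_all

lemma tridiag_carrier[simp]: "tridiag N \<in> carrier_mat N N"
  unfolding tridiag_def by (rule mult_carrier_mat[of _ N N _ N]) auto

lemma tridiag_dim[simp]: "dim_row (tridiag N) = N" "dim_col (tridiag N) = N"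
  using tridiag_carrier[of N] unfolding carrier_mat_def by auto

lemma bidiag_index: "i < N \<Longrightarrow> j < N \<Longrightarrow> bidiag N $$ (i, j) = (if i = j \<or> i = Suc j then 1 else 0)"
  unfolding bidiag_def by simp

lemma tridiag_index:
  assumes ij: "i < N" "j < N"
  shows "tridiag N $$ (i, j) =
    (if i = j then (if i = 0 then 1 else 2) else if i = Suc j \<or> j = Suc i then 1 else 0)"
proof -
  define g where "g k = (if k = j \<or> j = Suc k then 1 else (0::real))" for k
  have "tridiag N $$ (i, j) = (\<Sum>k<N. bidiag N $$ (i, k) * bidiag N $$ (j, k))"
    using ij unfolding tridiag_def by (simp add: scalar_prod_def lessThan_atLeast0 Matrix.row_def)
  also have "\<dots> = (\<Sum>k<N. (if k = i then g k else 0)) + (\<Sum>k<N. (if i = Suc k then g k else 0))"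
    unfolding sum.distrib[symmetric] by (rule sum.cong) (use ij in \<open>auto simp: bidiag_index g_def\<close>)
  also have "\<dots> = g i + (if i = 0 then 0 else g (i - 1))"
    using ij by (cases i) auto
  finally show ?thesis by (auto simp: g_def)
qed

lemma tridiag_row_sum:
  assumes i: "i < N"
  shows "(\<Sum>j<N. tridiag N $$ (i, j) * v j)
    = (if i = 0 then v 0 else v (i - 1) + 2 * v i) + (if Suc i < N then v (Suc i) else 0)"
proof -
  have "(\<Sum>j<N. tridiag N $$ (i, j) * v j) = (\<Sum>j<N. (if j = i then (if i = 0 then 1 else 2) * v j else 0)
       + (if j = Suc i then v j else 0) + (if Suc j = i then v j else 0))"
    by (rule sum.cong) (use i in \<open>auto simp: tridiag_index\<close>)
  also have "\<dots> = (if i = 0 then 1 else 2) * v i + (if Suc i < N then v (Suc i) else 0)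
      + (if i = 0 then 0 else v (i - 1))"
    using i by (cases i) (simp_all add: sum.distrib)
  finally show ?thesis by auto
qed

lemma det_bidiag: "det (bidiag N) = 1"
proof -
  have "det (bidiag N) = prod_list (diag_mat (bidiag N))"
    by (rule det_lower_triangular[of N], auto simp: bidiag_index)
  also have "diag_mat (bidiag N) = replicate N 1"
    unfolding diag_mat_def by (rule nth_equalityI, auto simp: bidiag_index)
  finally show ?thesis by simp
qed

lemma det_tridiag: "det (tridiag N) = 1"
  unfolding tridiag_def
  using det_mult[OF bidiag_carrier, of "transpose_mat (bidiag N)"] det_transpose[OF bidiag_carrier] det_bidiag
  by simp

lemma tridiag_symmetric: "transpose_mat (tridiag N) = tridiag N"
  unfolding tridiag_def by (simp add: transpose_mult[of _ N N _ N])

lemma smult_one_mat_one: "(1::'a::ring_1) \<cdot>\<^sub>m 1\<^sub>m N = 1\<^sub>m N"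
  by (rule eq_matI) auto

(* Since det T_N = 1, its adjugate is its inverse. *)
definition tridiag_inv :: "nat \<Rightarrow> real mat" where
  "tridiag_inv N = adj_mat (tridiag N)"

lemma tridiag_inv_carrier[simp]: "tridiag_inv N \<in> carrier_mat N N"
  unfolding tridiag_inv_def using adj_mat(1)[OF tridiag_carrier] .

lemma tridiag_inv_right: "tridiag N * tridiag_inv N = 1\<^sub>m N"
  unfolding tridiag_inv_def using adj_mat(2)[OF tridiag_carrier] det_tridiag smult_one_mat_one by simp

lemma tridiag_inv_left: "tridiag_inv N * tridiag N = 1\<^sub>m N"
  unfolding tridiag_inv_def using adj_mat(3)[OF tridiag_carrier] det_tridiag smult_one_mat_one by simp

lemma det_tridiag_inv: "det (tridiag_inv N) = 1"
  using det_mult[OF tridiag_carrier tridiag_inv_carrier, of N] tridiag_inv_right[of N] det_tridiag[of N]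
  by simp

lemma tridiag_mult_vec_inj:
  assumes a: "a \<in> carrier_vec N" and b: "b \<in> carrier_vec N"
    and e: "tridiag N *\<^sub>v a = tridiag N *\<^sub>v b"
  shows "a = b"
proof -
  have "a = (tridiag_inv N * tridiag N) *\<^sub>v a" using a tridiag_inv_left by simp
  also have "\<dots> = tridiag_inv N *\<^sub>v (tridiag N *\<^sub>v b)"
    using a e by (simp add: assoc_mult_mat_vec[of _ N N _ N])
  also have "\<dots> = b" using b tridiag_inv_left by (simp add: assoc_mult_mat_vec[of _ N N _ N, symmetric])
  finally show ?thesis .
qed

definition tpow :: "nat \<Rightarrow> int \<Rightarrow> real mat" where
  "tpow N q = (if q \<ge> 0 then tridiag N ^\<^sub>m nat q else tridiag_inv N ^\<^sub>m nat (- q))"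

lemma tpow_carrier[simp]: "tpow N q \<in> carrier_mat N N"
  unfolding tpow_def by simp

lemma tpow_dim[simp]: "dim_row (tpow N q) = N" "dim_col (tpow N q) = N"
  using tpow_carrier[of N q] unfolding carrier_mat_def by simp_all

lemma det_tpow: "det (tpow N q) = 1"
  unfolding tpow_def using det_pow_mat[OF tridiag_carrier] det_pow_mat[OF tridiag_inv_carrier]
    det_tridiag det_tridiag_inv by simp

lemma tpow_0: "tpow N 0 = 1\<^sub>m N"
  unfolding tpow_def by simp

lemma tpow_1: "tpow N 1 = tridiag N"
  unfolding tpow_def by simp

lemma tpow_Suc: "tpow N (q + 1) = tridiag N * tpow N q \<and> tpow N (q + 1) = tpow N q * tridiag N"
proof (cases "q \<ge> 0")
  case True
  then have "nat (q + 1) = Suc (nat q)" by simp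
  then show ?thesis using True pow_mat_commute[OF tridiag_carrier] unfolding tpow_def by simp
next
  case False
  define m where "m = nat (- q) - 1"
  have m: "q = - int (Suc m)" using False unfolding m_def by simp
  show ?thesis
  proof (cases m)
    case 0
    then show ?thesis using m unfolding tpow_def by (simp add: tridiag_inv_left tridiag_inv_right)
  next
    case (Suc m')
    define P where "P = tridiag_inv N ^\<^sub>m Suc m'"
    have P: "P \<in> carrier_mat N N" unfolding P_def by (rule pow_carrier_mat[OF tridiag_inv_carrier])
    have n: "nat (- q) = Suc (Suc m')" "nat (- (q + 1)) = Suc m'" "\<not> 0 \<le> q + 1"
      using m Suc by simp_all
    have q: "tpow N q = P * tridiag_inv N"
      using False n unfolding tpow_def P_def by (simp del: pow_mat.simps add: pow_mat.simps(2)[of _ "Suc m'"])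
    have q1: "tpow N (q + 1) = P"
      using n unfolding tpow_def P_def by (simp del: pow_mat.simps)
    have q': "tpow N q = tridiag_inv N * P"
      using q pow_mat_commute[OF tridiag_inv_carrier[of N], of "Suc m'"] unfolding P_def by simp
    have "tridiag N * tpow N q = (tridiag N * tridiag_inv N) * P" unfolding q'
      by (rule assoc_mult_mat[symmetric, of _ N N _ N _ N]) (auto simp: P)
    also have "\<dots> = tpow N (q + 1)" using q1 tridiag_inv_right P by simp
    finally have left: "tpow N (q + 1) = tridiag N * tpow N q" ..
    have "tpow N q * tridiag N = P * (tridiag_inv N * tridiag N)" unfolding q
      by (rule assoc_mult_mat[of _ N N _ N _ N]) (auto simp: P)
    also have "\<dots> = tpow N (q + 1)" using q1 tridiag_inv_left P by simp
    finally show ?thesis using left by simp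
  qed
qed

lemma tpow_add_nat:
  "tpow N (q + int j) = tridiag N ^\<^sub>m j * tpow N q \<and> tpow N (q + int j) = tpow N q * tridiag N ^\<^sub>m j"
proof (induction j)
  case 0 then show ?case by simp
next
  case (Suc j)
  have e: "q + int (Suc j) = (q + int j) + 1" by simp
  have "tpow N (q + int (Suc j)) = tridiag N * (tridiag N ^\<^sub>m j * tpow N q)"
    using tpow_Suc e Suc.IH by metis
  also have "\<dots> = tridiag N ^\<^sub>m Suc j * tpow N q"
    using pow_mat_commute[OF tridiag_carrier[of N], of j] by (simp add: assoc_mult_mat[of _ N N _ N _ N])
  finally have left: "tpow N (q + int (Suc j)) = tridiag N ^\<^sub>m Suc j * tpow N q" .
  have "tpow N (q + int (Suc j)) = (tpow N q * tridiag N ^\<^sub>m j) * tridiag N"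
    using tpow_Suc e Suc.IH by metis
  also have "\<dots> = tpow N q * tridiag N ^\<^sub>m Suc j"
    by (simp add: assoc_mult_mat[of "tpow N q" N N "tridiag N ^\<^sub>m j" N "tridiag N" N])
  finally show ?case using left by simp
qed

lemma tridiag_pow_symmetric:
  "i < N \<Longrightarrow> k < N \<Longrightarrow> (tridiag N ^\<^sub>m j) $$ (i, k) = (tridiag N ^\<^sub>m j) $$ (k, i)"
  using transpose_pow_mat[OF tridiag_carrier[of N], of j] tridiag_symmetric[of N]
  by (metis index_transpose_mat(1) pow_mat_dim_square tridiag_carrier)

definition krylov :: "nat \<Rightarrow> real mat" where
  "krylov N = mat N N (\<lambda>(k,j). (tridiag N ^\<^sub>m j) $$ (k, 0))"

lemma krylov_carrier[simp]: "krylov N \<in> carrier_mat N N"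
  unfolding krylov_def by simp

lemma krylov_dim[simp]: "dim_row (krylov N) = N" "dim_col (krylov N) = N"
  unfolding krylov_def by simp_all

(* Since T is tridiagonal with ones below the diagonal, T^j e_0 has its last nonzero entry 1
   in position j. *)
lemma tridiag_pow_col0_triangular:
  "(\<forall>k<N. j < k \<longrightarrow> (tridiag N ^\<^sub>m j) $$ (k, 0) = 0) \<and> (j < N \<longrightarrow> (tridiag N ^\<^sub>m j) $$ (j, 0) = 1)"
proof (induction j)
  case 0
  then show ?case by auto
next
  case (Suc j)
  define v where "v l = (tridiag N ^\<^sub>m j) $$ (l, 0)" for l
  have "tridiag N ^\<^sub>m Suc j = tridiag N * tridiag N ^\<^sub>m j"
    using pow_mat_commute[OF tridiag_carrier[of N], of j] by simp
  then have step: "(tridiag N ^\<^sub>m Suc j) $$ (k, 0)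
      = (if k = 0 then v 0 else v (k - 1) + 2 * v k) + (if Suc k < N then v (Suc k) else 0)"
    if "k < N" for k
    using that tridiag_row_sum[OF that, of v]
    by (simp add: v_def scalar_prod_def lessThan_atLeast0 Matrix.row_def Matrix.col_def)
  have zero: "v l = 0" if "l < N" "j < l" for l using Suc.IH that unfolding v_def by blast
  show ?case
  proof (intro conjI allI impI)
    fix k assume "k < N" "Suc j < k"
    then show "(tridiag N ^\<^sub>m Suc j) $$ (k, 0) = 0" using step zero by auto
  next
    assume "Suc j < N"
    then show "(tridiag N ^\<^sub>m Suc j) $$ (Suc j, 0) = 1"
      using step zero Suc.IH unfolding v_def by auto
  qed
qed

lemma krylov_below_diag: "i < N \<Longrightarrow> j < i \<Longrightarrow> krylov N $$ (i, j) = 0"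
  unfolding krylov_def using tridiag_pow_col0_triangular by simp

lemma krylov_diag: "i < N \<Longrightarrow> krylov N $$ (i, i) = 1"
  unfolding krylov_def using tridiag_pow_col0_triangular by simp

lemma det_krylov: "det (krylov N) = 1"
  by (rule det_unit_upper_triangular[OF krylov_carrier]) (auto simp: krylov_below_diag krylov_diag)

definition moment :: "nat \<Rightarrow> int \<Rightarrow> real" where
  "moment N q = tpow N q $$ (0, 0)"

definition hankel :: "nat \<Rightarrow> nat \<Rightarrow> int \<Rightarrow> real mat" where
  "hankel N a q = mat a a (\<lambda>(i,j). moment N (q + int i + int j))"

definition hankel_det :: "nat \<Rightarrow> nat \<Rightarrow> int \<Rightarrow> real" where
  "hankel_det N a q = det (hankel N a q)"

lemma hankel_carrier[simp]: "hankel N a q \<in> carrier_mat a a"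
  unfolding hankel_def by simp

lemma hankel_det_0: "hankel_det N 0 q = 1"
  unfolding hankel_det_def by (rule det_dim_zero) simp

lemma hankel_det_1: "hankel_det N 1 q = moment N q"
proof -
  have "hankel_det N 1 q = hankel N 1 q $$ (0, 0)" unfolding hankel_det_def by (rule det_single) simp
  then show ?thesis unfolding hankel_def by simp
qed

(* Desnanot-Jacobi applied to a Hankel matrix: all five minors are again Hankel matrices. *)
lemma hankel_det_Q_relation:
  "hankel_det N (Suc (Suc b)) q * hankel_det N b (q + 2)
     = hankel_det N (Suc b) (q + 2) * hankel_det N (Suc b) q - (hankel_det N (Suc b) (q + 1))\<^sup>2"
proof -
  define A where "A = hankel N (Suc (Suc b)) q"
  have A: "A \<in> carrier_mat (Suc (Suc b)) (Suc (Suc b))" unfolding A_def by simp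
  have 1: "mat_delete A 0 0 = hankel N (Suc b) (q + 2)"
    by (rule eq_matI) (auto simp: A_def hankel_def mat_delete_def algebra_simps)
  have 2: "mat_delete A (Suc b) (Suc b) = hankel N (Suc b) q"
    by (rule eq_matI) (auto simp: A_def hankel_def mat_delete_def algebra_simps)
  have 3: "mat_delete A 0 (Suc b) = hankel N (Suc b) (q + 1)"
    by (rule eq_matI) (auto simp: A_def hankel_def mat_delete_def algebra_simps)
  have 4: "mat_delete A (Suc b) 0 = hankel N (Suc b) (q + 1)"
    by (rule eq_matI) (auto simp: A_def hankel_def mat_delete_def algebra_simps)
  have 5: "mat_delete (mat_delete A (Suc b) (Suc b)) 0 0 = hankel N b (q + 2)"
    unfolding 2 by (rule eq_matI) (auto simp: hankel_def mat_delete_def algebra_simps)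
  show ?thesis using desnanot_jacobi[OF A, unfolded 5, unfolded 1 2 3 4]
    unfolding hankel_det_def A_def[symmetric] by (simp add: power2_eq_square)
qed

(* Since T is symmetric, u(q+i+j) = (T^i T^q T^j)_00 = (Y^T T^q Y)_ij for i, j < N. *)
lemma moment_gram:
  assumes ij: "i < N" "j < N"
  shows "moment N (q + int i + int j)
           = (\<Sum>k<N. krylov N $$ (k, i) * (\<Sum>l<N. tpow N q $$ (k, l) * krylov N $$ (l, j)))"
proof -
  have e1: "tpow N (q + int i + int j) = tridiag N ^\<^sub>m i * tpow N (q + int j)"
    using tpow_add_nat[of N "q + int j" i] by (simp add: algebra_simps)
  have e2: "tpow N (q + int j) = tpow N q * tridiag N ^\<^sub>m j" using conjunct2[OF tpow_add_nat[of N q j]] .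
  have "moment N (q + int i + int j) = (tridiag N ^\<^sub>m i * (tpow N q * tridiag N ^\<^sub>m j)) $$ (0, 0)"
    unfolding moment_def e1 e2 ..
  also have "\<dots> = (\<Sum>k<N. (tridiag N ^\<^sub>m i) $$ (0, k)
                    * (\<Sum>l<N. tpow N q $$ (k, l) * (tridiag N ^\<^sub>m j) $$ (l, 0)))"
    using ij by (simp add: scalar_prod_def lessThan_atLeast0 Matrix.row_def Matrix.col_def)
  also have "\<dots> = (\<Sum>k<N. krylov N $$ (k, i) * (\<Sum>l<N. tpow N q $$ (k, l) * krylov N $$ (l, j)))"
    by (rule sum.cong, simp, insert ij, auto simp: krylov_def tridiag_pow_symmetric intro!: sum.cong)
  finally show ?thesis .
qed

(* The full Hankel determinant: H_N(q) = Y^T T^q Y with det Y = det T^q = 1. *)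
lemma hankel_det_full: "hankel_det N N q = 1"
proof -
  have "hankel N N q = transpose_mat (krylov N) * (tpow N q * krylov N)"
    by (rule eq_matI)
      (auto simp: hankel_def moment_gram scalar_prod_def lessThan_atLeast0 Matrix.row_def Matrix.col_def)
  then have "hankel_det N N q = det (transpose_mat (krylov N)) * det (tpow N q * krylov N)"
    unfolding hankel_det_def using det_mult[of "transpose_mat (krylov N)" N "tpow N q * krylov N"]
      mult_carrier_mat[OF tpow_carrier krylov_carrier, of N q] by simp
  also have "\<dots> = 1" using det_mult[OF tpow_carrier krylov_carrier, of N q] det_tpow det_krylov
      det_transpose[OF krylov_carrier] by simp
  finally show ?thesis .
qed

(* For q = 0 the moments form the Gram matrix Y^T Y ... *)
lemma moment_zero_gram:
  assumes ij: "i < N" "j < N"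
  shows "moment N (int i + int j) = (\<Sum>k<N. krylov N $$ (k, i) * krylov N $$ (k, j))"
proof -
  have "(\<Sum>l<N. tpow N 0 $$ (k, l) * krylov N $$ (l, j)) = krylov N $$ (k, j)" if "k < N" for k
    using sum_lessThan_single[OF that, of "\<lambda>l. tpow N 0 $$ (k, l) * krylov N $$ (l, j)"] that
    by (simp add: tpow_0)
  then show ?thesis using moment_gram[OF ij, of 0] by simp
qed

lemma hankel_det_at_0: "a \<le> N \<Longrightarrow> hankel_det N a 0 = 1"
proof -
  assume a: "a \<le> N"
  have "hankel N a 0 = mat a a (\<lambda>(i,j). \<Sum>k<N. krylov N $$ (k, i) * krylov N $$ (k, j))"
    by (rule eq_matI) (use a in \<open>auto simp: hankel_def moment_zero_gram\<close>)
  then show ?thesis unfolding hankel_det_def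
    using det_gram_unit_triangular[of N "\<lambda>k i. krylov N $$ (k, i)" a] a krylov_below_diag krylov_diag
    by simp
qed

(* ... and for q = 1 the Gram matrix (L^T Y)^T (L^T Y), since T = L L^T;
   L^T Y is again unit upper triangular. *)
definition bidiag_krylov :: "nat \<Rightarrow> nat \<Rightarrow> nat \<Rightarrow> real" where
  "bidiag_krylov N m i = (\<Sum>k<N. bidiag N $$ (k, m) * krylov N $$ (k, i))"

lemma moment_one_gram:
  assumes ij: "i < N" "j < N"
  shows "moment N (1 + int i + int j) = (\<Sum>m<N. bidiag_krylov N m i * bidiag_krylov N m j)"
proof -
  let ?f = "\<lambda>k l m. (bidiag N $$ (k, m) * krylov N $$ (k, i)) * (bidiag N $$ (l, m) * krylov N $$ (l, j))"
  have T: "tpow N 1 $$ (k, l) = (\<Sum>m<N. bidiag N $$ (k, m) * bidiag N $$ (l, m))"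
    if "k < N" "l < N" for k l
    using that unfolding tpow_1 tridiag_def
    by (simp add: scalar_prod_def lessThan_atLeast0 Matrix.row_def Matrix.col_def)
  have "moment N (1 + int i + int j)
      = (\<Sum>k<N. krylov N $$ (k, i) * (\<Sum>l<N. tpow N 1 $$ (k, l) * krylov N $$ (l, j)))"
    by (rule moment_gram[OF ij])
  also have "\<dots> = (\<Sum>k<N. \<Sum>l<N. \<Sum>m<N. ?f k l m)"
    by (rule sum.cong[OF refl], auto simp: T sum_distrib_left sum_distrib_right mult_ac intro!: sum.cong)
  also have "\<dots> = (\<Sum>k<N. \<Sum>m<N. \<Sum>l<N. ?f k l m)"
    by (rule sum.cong[OF refl], rule sum.swap)
  also have "\<dots> = (\<Sum>m<N. \<Sum>k<N. \<Sum>l<N. ?f k l m)"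
    by (rule sum.swap)
  also have "\<dots> = (\<Sum>m<N. bidiag_krylov N m i * bidiag_krylov N m j)"
    unfolding bidiag_krylov_def by (simp add: sum_product)
  finally show ?thesis .
qed

lemma bidiag_krylov_below_diag: "i < m \<Longrightarrow> m < N \<Longrightarrow> bidiag_krylov N m i = 0"
  unfolding bidiag_krylov_def
proof (rule sum.neutral, intro ballI)
  fix k assume im: "i < m" "m < N" and k: "k \<in> {..<N}"
  show "bidiag N $$ (k, m) * krylov N $$ (k, i) = 0"
  proof (cases "k = m \<or> k = Suc m")
    case True then show ?thesis using krylov_below_diag[of k N i] im k by auto
  next
    case False then show ?thesis using k im by (simp add: bidiag_index)
  qed
qed

lemma bidiag_krylov_diag: "i < N \<Longrightarrow> bidiag_krylov N i i = 1"
proof -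
  assume i: "i < N"
  have "bidiag_krylov N i i = bidiag N $$ (i, i) * krylov N $$ (i, i)" unfolding bidiag_krylov_def
  proof (rule sum_lessThan_single[OF i])
    fix k assume k: "k < N" "k \<noteq> i"
    show "bidiag N $$ (k, i) * krylov N $$ (k, i) = 0"
    proof (cases "k = Suc i")
      case True then show ?thesis using krylov_below_diag[of k N i] k by auto
    next
      case False then show ?thesis using k i by (simp add: bidiag_index)
    qed
  qed
  then show ?thesis using i by (simp add: bidiag_index krylov_diag)
qed

lemma hankel_det_at_1: "a \<le> N \<Longrightarrow> hankel_det N a 1 = 1"
proof -
  assume a: "a \<le> N"
  have "hankel N a 1 = mat a a (\<lambda>(i,j). \<Sum>m<N. bidiag_krylov N m i * bidiag_krylov N m j)"
    by (rule eq_matI) (use a in \<open>auto simp: hankel_def moment_one_gram\<close>)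
  then show ?thesis unfolding hankel_det_def
    using det_gram_unit_triangular[of N "bidiag_krylov N" a] a bidiag_krylov_below_diag bidiag_krylov_diag
    by simp
qed

definition hankel_solution :: "nat \<Rightarrow> nat \<Rightarrow> int \<Rightarrow> real" where
  "hankel_solution r a m = hankel_det (Suc r) a (1 + int r - m - int a)"

(* Boundary values from F_0 = F_N = 1; the relation from the Hankel Desnanot-Jacobi identity. *)
lemma hankel_solution_is_Q_system: "is_Q_system r (hankel_solution r)"
  unfolding is_Q_system_def
proof (intro conjI allI impI)
  fix a :: nat and m :: int assume a: "1 \<le> a \<and> a \<le> r"
  obtain b where b: "a = Suc b" using a by (cases a) auto
  define q where "q = int r - m - int a"
  have "hankel_solution r a (m + 1) = hankel_det (Suc r) (Suc b) q"
    "hankel_solution r a (m - 1) = hankel_det (Suc r) (Suc b) (q + 2)"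
    "hankel_solution r a m = hankel_det (Suc r) (Suc b) (q + 1)"
    "hankel_solution r (a + 1) m = hankel_det (Suc r) (Suc (Suc b)) q"
    "hankel_solution r (a - 1) m = hankel_det (Suc r) b (q + 2)"
    unfolding hankel_solution_def q_def b by (simp_all add: algebra_simps)
  then show "hankel_solution r a (m + 1) * hankel_solution r a (m - 1)
    = (hankel_solution r a m)\<^sup>2 + hankel_solution r (a + 1) m * hankel_solution r (a - 1) m"
    using hankel_det_Q_relation[of "Suc r" b q] by (simp add: algebra_simps)
qed (simp_all add: hankel_solution_def hankel_det_0 hankel_det_full)

lemma hankel_solution_initial:
  assumes "a \<le> r"
  shows "hankel_solution r a (int r - int a) = 1" "hankel_solution r a (int r - int a + 1) = 1"
  using hankel_det_at_1[of a "Suc r"] hankel_det_at_0[of a "Suc r"] assms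
  unfolding hankel_solution_def by simp_all

lemma hankel_solution_1: "hankel_solution r 1 (int n + int r - 1) = moment (Suc r) (1 - int n)"
  unfolding hankel_solution_def hankel_det_1 by (simp add: algebra_simps)

(* Positivity makes the divisor R_{a,m-1} nonzero. *)
lemma Q_system_unique:
  fixes R R' :: "nat \<Rightarrow> int \<Rightarrow> real"
  assumes Q: "is_Q_system r R" and Q': "is_Q_system r R'"
    and init: "\<And>a m. 1 \<le> a \<Longrightarrow> a \<le> r \<Longrightarrow> m = r - a \<or> m = r - a + 1 \<Longrightarrow>
                 R a (int m) > 0 \<and> R a (int m) = R' a (int m)"
  shows "1 \<le> a \<Longrightarrow> a \<le> r \<Longrightarrow> r - a \<le> m \<Longrightarrow> R a (int m) > 0 \<and> R a (int m) = R' a (int m)"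
proof (induction m arbitrary: a rule: less_induct)
  case (less m)
  have bound: "\<And>n. R 0 n = 1" "\<And>n. R (r + 1) n = 1" "\<And>n. R' 0 n = 1" "\<And>n. R' (r + 1) n = 1"
    using Q Q' unfolding is_Q_system_def by simp_all
  have rel: "\<And>n. R a (n + 1) * R a (n - 1) = (R a n)\<^sup>2 + R (a + 1) n * R (a - 1) n"
    "\<And>n. R' a (n + 1) * R' a (n - 1) = (R' a n)\<^sup>2 + R' (a + 1) n * R' (a - 1) n"
    using Q Q' less.prems unfolding is_Q_system_def by blast+
  show ?case
  proof (cases "m \<le> r - a + 1")
    case True
    then have "m = r - a \<or> m = r - a + 1" using less.prems by linarith
    then show ?thesis using init less.prems by blast
  next
    case False
    define m0 where "m0 = m - 1"
    have m0: "m = Suc m0" "r - a + 1 \<le> m0" "1 \<le> m0" using False less.prems unfolding m0_def by auto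
    have im: "int m = int m0 + 1" "int (m0 - 1) = int m0 - 1" using m0 by auto
    have IH: "R b (int k) > 0 \<and> R b (int k) = R' b (int k)"
      if "k < m" "b = 0 \<or> b = r + 1 \<or> (1 \<le> b \<and> b \<le> r \<and> r - b \<le> k)" for b k
      using that less.IH[of k b] bound by auto
    have I1: "R a (int m0) > 0 \<and> R a (int m0) = R' a (int m0)"
      using IH[of m0 a] m0 less.prems by auto
    have "m0 - 1 < m" "r - a \<le> m0 - 1" using m0 by auto
    then have I2: "R a (int m0 - 1) > 0 \<and> R a (int m0 - 1) = R' a (int m0 - 1)"
      using IH[of "m0 - 1" a] less.prems unfolding im(2) by blast
    have "a + 1 = r + 1 \<or> (1 \<le> a + 1 \<and> a + 1 \<le> r \<and> r - (a + 1) \<le> m0)" using m0 less.prems by auto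
    then have I3: "R (a + 1) (int m0) > 0 \<and> R (a + 1) (int m0) = R' (a + 1) (int m0)"
      using IH[of m0 "a + 1"] m0 by blast
    have "a - 1 = 0 \<or> (1 \<le> a - 1 \<and> a - 1 \<le> r \<and> r - (a - 1) \<le> m0)" using m0 less.prems by auto
    then have I4: "R (a - 1) (int m0) > 0 \<and> R (a - 1) (int m0) = R' (a - 1) (int m0)"
      using IH[of m0 "a - 1"] m0 by blast
    define X where "X = R a (int m0 - 1)"
    define Y where "Y = (R a (int m0))\<^sup>2 + R (a + 1) (int m0) * R (a - 1) (int m0)"
    have X: "X > 0" using I2 unfolding X_def by simp
    have Y: "Y > 0" using I3 I4 unfolding Y_def by (simp add: add_nonneg_pos)
    have A: "R a (int m0 + 1) * X = Y"
      using rel(1) unfolding X_def Y_def by blast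
    have B: "R' a (int m0 + 1) * X = Y"
      using rel(2)[of "int m0"] I1 I2 I3 I4 unfolding X_def Y_def by simp
    have "R a (int m0 + 1) = Y / X" "R' a (int m0 + 1) = Y / X"
      using A B X by (simp_all add: eq_divide_eq)
    then show ?thesis using X Y im by simp
  qed
qed

(* W_m satisfies the same recurrence, and W_m(t) = (-1)^m U_{2m}(sqrt t),
   so W_m is the polynomial V_m of the statement. *)
fun chebS :: "nat \<Rightarrow> real poly" where
  "chebS 0 = 0"
| "chebS (Suc 0) = 1"
| "chebS (Suc (Suc k)) = [:2, -1:] * chebS (Suc k) - chebS k"

definition chebW :: "nat \<Rightarrow> real poly" where
  "chebW m = chebS (Suc m) - chebS m"

lemma chebW_rec: "chebW (Suc (Suc m)) = [:2, -1:] * chebW (Suc m) - chebW m"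
proof -
  define c where "c = [:2, -1::real:]"
  have s: "\<And>k. chebS (Suc (Suc k)) = c * chebS (Suc k) - chebS k" unfolding c_def by simp
  show ?thesis unfolding chebW_def c_def[symmetric] s by (simp add: algebra_simps del: chebS.simps)
qed

lemma chebU_even_rec:
  "poly (chebU (2 * m + 4)) x = (x\<^sup>2 - 2) * poly (chebU (2 * m + 2)) x - poly (chebU (2 * m)) x"
proof -
  define f where "f k = poly (chebU k) x" for k
  have rec: "f (Suc (Suc k)) = x * f (Suc k) - f k" for k unfolding f_def by simp
  have h1: "f (2 * m + 4) = x * f (2 * m + 3) - f (2 * m + 2)"
    using rec[of "2 * m + 2"] by (simp add: numeral_eq_Suc)
  have h2: "f (2 * m + 3) = x * f (2 * m + 2) - f (2 * m + 1)"
    using rec[of "2 * m + 1"] by (simp add: numeral_eq_Suc)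
  have h3: "f (2 * m + 2) = x * f (2 * m + 1) - f (2 * m)"
    using rec[of "2 * m"] by (simp add: numeral_eq_Suc)
  have "f (2 * m + 4) = (x\<^sup>2 - 2) * f (2 * m + 2) - f (2 * m)"
    unfolding h1 h2 h3 by (simp add: algebra_simps power2_eq_square)
  then show ?thesis unfolding f_def .
qed

lemma chebW_eq_chebU:
  assumes t: "t \<ge> 0"
  shows "poly (chebW m) t = (-1) ^ m * poly (chebU (2 * m)) (sqrt t)"
proof (induction m rule: nat_less_induct)
  case (1 m)
  have st: "(sqrt t)\<^sup>2 = t" using t by simp
  consider "m = 0" | "m = 1" | m2 where "m = Suc (Suc m2)" by (cases m; cases "m - 1") auto
  then show ?case
  proof cases
    case 1 then show ?thesis by (simp add: chebW_def)
  next
    case 2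
    have "poly (chebW 1) t = 1 - t" by (simp add: chebW_def numeral_eq_Suc)
    moreover have "poly (chebU 2) (sqrt t) = t - 1" using st by (simp add: numeral_eq_Suc power2_eq_square)
    ultimately show ?thesis using 2 by simp
  next
    case 3
    have "Suc m2 < m" "m2 < m" using 3 by simp_all
    then have IH1: "poly (chebW (Suc m2)) t = (-1) ^ Suc m2 * poly (chebU (2 * Suc m2)) (sqrt t)"
      and IH2: "poly (chebW m2) t = (-1) ^ m2 * poly (chebU (2 * m2)) (sqrt t)"
      using "1.IH" by blast+
    have "poly (chebW m) t = (2 - t) * poly (chebW (Suc m2)) t - poly (chebW m2) t"
      unfolding 3 chebW_rec by (simp add: algebra_simps)
    also have "\<dots> = (-1) ^ m2 * ((t - 2) * poly (chebU (2 * Suc m2)) (sqrt t) - poly (chebU (2 * m2)) (sqrt t))"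
      unfolding IH1 IH2 by (simp add: algebra_simps del: chebU.simps)
    also have "\<dots> = (-1) ^ m * poly (chebU (2 * m)) (sqrt t)"
    proof -
      have "poly (chebU (2 * m2 + 4)) (sqrt t)
          = (t - 2) * poly (chebU (2 * m2 + 2)) (sqrt t) - poly (chebU (2 * m2)) (sqrt t)"
        using chebU_even_rec[of m2 "sqrt t"] st by (simp del: chebU.simps)
      moreover have "2 * m = 2 * m2 + 4" "2 * Suc m2 = 2 * m2 + 2" "(-1::real) ^ m = (-1) ^ m2"
        using 3 by simp_all
      ultimately show ?thesis by (simp del: chebU.simps)
    qed
    finally show ?thesis .
  qed
qed

(* A polynomial is determined by its values on [0, 1], so chebV (defined by THE) is W. *)
lemma chebV_eq_chebW: "chebV m = chebW m"
  unfolding chebV_def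
proof (rule the_equality)
  show "\<forall>t\<ge>0. poly (chebW m) t = (- 1) ^ m * poly (chebU (2 * m)) (sqrt t)" using chebW_eq_chebU by simp
next
  fix p assume p: "\<forall>t\<ge>0. poly p t = (- 1) ^ m * poly (chebU (2 * m)) (sqrt t)"
  show "p = chebW m"
  proof (rule ccontr)
    assume "p \<noteq> chebW m"
    then have "p - chebW m \<noteq> 0" by simp
    then have fin: "finite {x. poly (p - chebW m) x = 0}" by (rule poly_roots_finite)
    have "{0..1::real} \<subseteq> {x. poly (p - chebW m) x = 0}" using p chebW_eq_chebU by auto
    then have "finite {0..1::real}" using fin finite_subset by blast
    then show False using infinite_Icc[of "0::real" 1] by simp
  qed
qed

lemma chebS_at_0: "poly (chebS k) 0 = real k"
  by (induction k rule: chebS.induct) (auto simp: algebra_simps)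

lemma chebW_coeff_0: "fps_nth (fps_of_poly (chebW k)) 0 = 1"
  using chebS_at_0[of k] chebS_at_0[of "Suc k"] by (simp add: chebW_def poly_0_coeff_0[symmetric])

lemma chebW_inverse: "fps_of_poly (chebW k) * inverse (fps_of_poly (chebW k)) = 1"
  using chebW_coeff_0[of k] by (simp add: inverse_mult_eq_1')

lemma two_minus_X: "[:2, -1:] = (2::real poly) - [:0, 1:]"
proof -
  have "poly [:2, -1:] = poly ((2::real poly) - [:0, 1:])" by (rule ext) simp
  then show ?thesis by (simp only: poly_eq_poly_eq_iff)
qed

lemma chebW_shift: "chebW r = chebW (Suc r) + [:0, 1:] * chebS (Suc r)"
proof -
  define c where "c = [:2, -1::real:]"
  define Xp where "Xp = [:0, 1::real:]"
  have s: "chebS (Suc (Suc r)) = c * chebS (Suc r) - chebS r" unfolding c_def by simp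
  show ?thesis unfolding chebW_def s c_def two_minus_X Xp_def[symmetric]
    by (simp add: algebra_simps del: chebS.simps)
qed

(* The generating functions z_i(t) = (-1)^i S_{r+1-i}(t) / W_{r+1}(t), i <= r + 1, solve
   (T_{r+1} - t) z = e_0 (with z_{r+1} = 0 as boundary), i.e. z is the first column of the
   resolvent of T_{r+1}. *)
definition resolvent :: "nat \<Rightarrow> nat \<Rightarrow> real fps" where
  "resolvent r i = fps_of_poly ((-1) ^ i * chebS (Suc r - i)) * inverse (fps_of_poly (chebW (Suc r)))"

(* Row 0 of (T - t) z = e_0. *)
lemma resolvent_row_0: "(1 - fps_X) * resolvent r 0 + resolvent r 1 = 1"
proof -
  define c where "c = [:2, -1::real:]"
  have s: "chebS (Suc (Suc r)) = c * chebS (Suc r) - chebS r" unfolding c_def by simp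
  define Xp where "Xp = [:0, 1::real:]"
  have p: "(1 - Xp) * chebS (Suc r) - chebS r = chebW (Suc r)"
    unfolding chebW_def s c_def two_minus_X Xp_def[symmetric]
    by (simp add: algebra_simps del: chebS.simps)
  have "(1 - fps_X) * resolvent r 0 + resolvent r 1
      = fps_of_poly ((1 - Xp) * chebS (Suc r) - chebS r) * inverse (fps_of_poly (chebW (Suc r)))"
    unfolding resolvent_def fps_of_poly_mult fps_of_poly_diff fps_of_poly_1 Xp_def fps_of_poly_fps_X
    by (simp add: algebra_simps fps_of_poly_uminus del: chebS.simps)
  also have "\<dots> = 1" unfolding p by (rule chebW_inverse)
  finally show ?thesis .
qed

(* Rows 1..r of (T - t) z = e_0. *)
lemma resolvent_row_Suc:
  assumes j: "j < r"
  shows "resolvent r j + (2 - fps_X) * resolvent r (Suc j) + resolvent r (Suc (Suc j)) = 0"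
proof -
  define d where "d = r - Suc j"
  have e1: "Suc r - j = Suc (Suc d)" "Suc r - Suc j = Suc d" "Suc r - Suc (Suc j) = d"
    using j unfolding d_def by auto
  define c where "c = [:2, -1::real:]"
  define p where "p = (-1) ^ j * chebS (Suc (Suc d)) + (2 - [:0, 1:]) * ((-1) ^ Suc j * chebS (Suc d))
                        + (-1) ^ Suc (Suc j) * chebS d"
  have s: "chebS (Suc (Suc d)) = c * chebS (Suc d) - chebS d" unfolding c_def by simp
  have p: "p = 0"
    unfolding p_def s c_def two_minus_X by (simp add: algebra_simps del: chebS.simps)
  have "resolvent r j + (2 - fps_X) * resolvent r (Suc j) + resolvent r (Suc (Suc j))
     = fps_of_poly p * inverse (fps_of_poly (chebW (Suc r)))"
    unfolding resolvent_def e1 p_def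
    by (simp only: fps_of_poly_mult fps_of_poly_add fps_of_poly_diff fps_of_poly_fps_X
        fps_of_poly_numeral fps_of_poly_power fps_of_poly_uminus fps_of_poly_1 algebra_simps)
  also have "\<dots> = 0" unfolding p by simp
  finally show ?thesis .
qed

lemma resolvent_last: "resolvent r (Suc r) = 0"
  unfolding resolvent_def by simp

lemma fps_nth_two: "fps_nth (2 * f) n = 2 * fps_nth (f::real fps) n"
  by (simp only: mult_2 fps_add_nth)

(* Coefficientwise, the resolvent equations say T c_n = c_{n-1} (and T c_0 = e_0), where
   c_n is the vector of n-th coefficients; hence c_n = T^{-(n+1)} e_0. *)
definition resolvent_coeff :: "nat \<Rightarrow> nat \<Rightarrow> nat \<Rightarrow> real" where
  "resolvent_coeff r n i = fps_nth (resolvent r i) n"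

lemma resolvent_coeff_row_0:
  "resolvent_coeff r n 0 + resolvent_coeff r n 1 = (if n = 0 then 1 else resolvent_coeff r (n - 1) 0)"
proof -
  have "fps_nth ((1 - fps_X) * resolvent r 0 + resolvent r 1) n = fps_nth (1::real fps) n"
    using resolvent_row_0 by simp
  moreover have "(1 - fps_X) * resolvent r 0 + resolvent r 1
      = resolvent r 0 - fps_X * resolvent r 0 + resolvent r 1" by (simp add: algebra_simps)
  ultimately show ?thesis unfolding resolvent_coeff_def by (cases n) (simp_all add: fps_X_mult_nth)
qed

lemma resolvent_coeff_row_Suc:
  assumes j: "j < r"
  shows "resolvent_coeff r n j + 2 * resolvent_coeff r n (Suc j) + resolvent_coeff r n (Suc (Suc j))
    = (if n = 0 then 0 else resolvent_coeff r (n - 1) (Suc j))"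
proof -
  let ?z = "resolvent r"
  have "fps_nth (?z j + (2 - fps_X) * ?z (Suc j) + ?z (Suc (Suc j))) n = 0"
    using resolvent_row_Suc[OF j] by simp
  moreover have "?z j + (2 - fps_X) * ?z (Suc j) + ?z (Suc (Suc j))
      = ?z j + ?z (Suc j) + ?z (Suc j) - fps_X * ?z (Suc j) + ?z (Suc (Suc j))"
  proof -
    have "(2 - fps_X) * ?z (Suc j) = 2 * ?z (Suc j) - fps_X * ?z (Suc j)" by (rule left_diff_distrib)
    also have "2 * ?z (Suc j) = ?z (Suc j) + ?z (Suc j)" by (rule mult_2)
    finally show ?thesis by (simp only: add_diff_eq add.assoc)
  qed
  ultimately show ?thesis unfolding resolvent_coeff_def
    by (cases n) (simp_all add: fps_X_mult_nth fps_nth_two)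
qed

lemma resolvent_coeff_last: "resolvent_coeff r n (Suc r) = 0"
  unfolding resolvent_coeff_def using resolvent_last by simp

definition resolvent_vec :: "nat \<Rightarrow> nat \<Rightarrow> real vec" where
  "resolvent_vec r n = vec (Suc r) (\<lambda>i. resolvent_coeff r n i)"

lemma tridiag_resolvent_vec:
  assumes r: "1 \<le> r"
  shows "tridiag (Suc r) *\<^sub>v resolvent_vec r n
           = (if n = 0 then unit_vec (Suc r) 0 else resolvent_vec r (n - 1))"
proof (rule eq_vecI)
  let ?c = "resolvent_coeff r n"
  fix i assume "i < dim_vec (if n = 0 then unit_vec (Suc r) 0 else resolvent_vec r (n - 1))"
  then have i: "i < Suc r" by (cases "n = 0") (auto simp: resolvent_vec_def)
  have "(tridiag (Suc r) *\<^sub>v resolvent_vec r n) $ i = (\<Sum>j<Suc r. tridiag (Suc r) $$ (i, j) * ?c j)"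
    using i by (simp add: resolvent_vec_def scalar_prod_def lessThan_atLeast0 Matrix.row_def)
  also have "\<dots> = (if i = 0 then ?c 0 else ?c (i - 1) + 2 * ?c i) + (if Suc i < Suc r then ?c (Suc i) else 0)"
    by (rule tridiag_row_sum[OF i])
  also have "\<dots> = (if i = 0 then ?c 0 + ?c 1 else ?c (i - 1) + 2 * ?c i + ?c (Suc i))"
    using r i resolvent_coeff_last[of r n] by (cases "Suc i < Suc r") (auto simp: less_Suc_eq)
  also have "\<dots> = (if n = 0 then unit_vec (Suc r) 0 else resolvent_vec r (n - 1)) $ i"
  proof (cases i)
    case 0 then show ?thesis using resolvent_coeff_row_0[of r n] by (simp add: resolvent_vec_def)
  next
    case (Suc j)
    then have j: "j < r" using i by simp
    show ?thesis using resolvent_coeff_row_Suc[OF j, of n] Suc i by (simp add: resolvent_vec_def)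
  qed
  finally show "(tridiag (Suc r) *\<^sub>v resolvent_vec r n) $ i
      = (if n = 0 then unit_vec (Suc r) 0 else resolvent_vec r (n - 1)) $ i" .
qed (auto simp: resolvent_vec_def)

lemma moment_neg:
  assumes r: "1 \<le> r"
  shows "moment (Suc r) (- int (Suc n)) = resolvent_coeff r n 0"
proof -
  define N where "N = Suc r"
  define cv where "cv n = col (tpow N (- int (Suc n))) 0" for n
  have cvc: "cv n \<in> carrier_vec N" for n unfolding cv_def carrier_vec_def by simp
  have rvc: "resolvent_vec r n \<in> carrier_vec N" for n unfolding resolvent_vec_def N_def by simp
  have Tcv: "tridiag N *\<^sub>v cv n = col (tpow N (- int n)) 0" for n
  proof -
    have "tpow N (- int (Suc n) + 1) = tridiag N * tpow N (- int (Suc n))" using tpow_Suc by blast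
    moreover have "- int (Suc n) + 1 = - int n" by simp
    ultimately have "tpow N (- int n) = tridiag N * tpow N (- int (Suc n))" by simp
    then show ?thesis
      unfolding cv_def using col_mult2[OF tridiag_carrier tpow_carrier, of 0 N] by (simp add: N_def)
  qed
  (* both sequences of vectors satisfy T v_0 = e_0 and T v_{n+1} = v_n *)
  have "resolvent_vec r n = cv n"
  proof (induction n)
    case 0
    have "tridiag N *\<^sub>v resolvent_vec r 0 = unit_vec N 0"
      using tridiag_resolvent_vec[OF r, of 0] unfolding N_def by simp
    moreover have "tridiag N *\<^sub>v cv 0 = unit_vec N 0" using Tcv[of 0] tpow_0 by (simp add: N_def)
    ultimately show ?case using tridiag_mult_vec_inj[OF rvc cvc] by simp
  next
    case (Suc n)
    have "tridiag N *\<^sub>v resolvent_vec r (Suc n) = resolvent_vec r n"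
      using tridiag_resolvent_vec[OF r, of "Suc n"] unfolding N_def by simp
    moreover have "tridiag N *\<^sub>v cv (Suc n) = cv n" using Tcv[of "Suc n"] unfolding cv_def by simp
    ultimately show ?case using tridiag_mult_vec_inj[OF rvc cvc] Suc by simp
  qed
  then have "resolvent_vec r n $ 0 = cv n $ 0" by simp
  then show ?thesis unfolding moment_def cv_def resolvent_vec_def N_def by simp
qed

lemma moment_generating_function:
  assumes r: "1 \<le> r"
  shows "Abs_fps (\<lambda>n. moment (Suc r) (1 - int n))
           = 1 + fps_X * (fps_of_poly (chebV r) / fps_of_poly (chebV (r + 1)))"
proof -
  define Winv where "Winv = inverse (fps_of_poly (chebW (Suc r)))"
  define z where "z = resolvent r 0"
  (* V_r / V_{r+1} = (W_{r+1} + t S_{r+1}) / W_{r+1} = 1 + t z_0 *)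
  have ratio: "fps_of_poly (chebV r) / fps_of_poly (chebV (Suc r)) = 1 + fps_X * z"
  proof -
    have "fps_of_poly (chebV r) / fps_of_poly (chebV (Suc r)) = fps_of_poly (chebW r) * Winv"
      unfolding chebV_eq_chebW Winv_def using chebW_coeff_0[of "Suc r"] by (simp add: fps_divide_unit)
    also have "\<dots> = fps_of_poly (chebW (Suc r)) * Winv + fps_X * z"
      unfolding chebW_shift[of r] z_def resolvent_def Winv_def
      by (simp add: fps_of_poly_add fps_of_poly_mult fps_of_poly_fps_X algebra_simps)
    also have "fps_of_poly (chebW (Suc r)) * Winv = 1" unfolding Winv_def by (rule chebW_inverse)
    finally show ?thesis .
  qed
  have u1: "moment (Suc r) 1 = 1" unfolding moment_def tpow_1 by (simp add: tridiag_index)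
  have u0: "moment (Suc r) 0 = 1" unfolding moment_def tpow_0 by simp
  show ?thesis
  proof (rule fps_ext)
    fix n
    consider "n = 0" | "n = 1" | j where "n = Suc (Suc j)" by (cases n; cases "n - 1") auto
    then show "fps_nth (Abs_fps (\<lambda>n. moment (Suc r) (1 - int n))) n
        = fps_nth (1 + fps_X * (fps_of_poly (chebV r) / fps_of_poly (chebV (r + 1)))) n"
    proof cases
      case 3
      then have "1 - int n = - int (Suc j)" by simp
      then have "moment (Suc r) (1 - int n) = moment (Suc r) (- int (Suc j))" by (rule arg_cong)
      also have "\<dots> = fps_nth z j"
        using moment_neg[OF r, of j] unfolding z_def resolvent_coeff_def .
      finally show ?thesis using 3 by (simp add: ratio fps_X_mult_nth)
    qed (simp_all add: ratio u0 u1 fps_X_mult_nth)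
  qed
qed

theorem mainTheorem16:
  fixes r :: nat and R :: "nat \<Rightarrow> int \<Rightarrow> real"
  assumes "r \<ge> 1"
    and "is_Q_system r R"
    and "\<forall>\<alpha>. 1 \<le> \<alpha> \<and> \<alpha> \<le> r \<longrightarrow>
           R \<alpha> (int r - int \<alpha>) = 1 \<and> R \<alpha> (int r - int \<alpha> + 1) = 1"
  shows "Abs_fps (\<lambda>n. R 1 (int n + int r - 1))
           = 1 + fps_X * (fps_of_poly (chebV r) / fps_of_poly (chebV (r + 1)))"
proof -
  have init: "R a (int m) > 0 \<and> R a (int m) = hankel_solution r a (int m)"
    if "1 \<le> a" "a \<le> r" "m = r - a \<or> m = r - a + 1" for a m
  proof -
    have "int m = int r - int a \<or> int m = int r - int a + 1" using that by auto
    then show ?thesis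
    proof
      assume "int m = int r - int a"
      then show ?thesis using that(1,2) assms(3) hankel_solution_initial(1)[of a r] by simp
    next
      assume "int m = int r - int a + 1"
      then show ?thesis using that(1,2) assms(3) hankel_solution_initial(2)[of a r] by simp
    qed
  qed
  have "R 1 (int n + int r - 1) = moment (Suc r) (1 - int n)" for n
  proof -
    have "R 1 (int (n + r - 1)) = hankel_solution r 1 (int (n + r - 1))"
      using Q_system_unique[OF assms(2) hankel_solution_is_Q_system init, of 1 "n + r - 1"] assms(1)
      by auto
    then show ?thesis using hankel_solution_1[of r n] assms(1) by (simp add: of_nat_diff)
  qed
  then show ?thesis using moment_generating_function[OF assms(1)] by simp
qed

end
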